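(* Fix $D_0>0$, $\alpha>0$, $p^a\ge0$, $\gamma\in(0,1)$. Let $d(p^s,p^c)=\max\{D_0-\alpha(p^s+p^c),0\}$. Consider the ex post regulation game in which the ISP chooses $p^s\in\mathbb{R}$ and the CP chooses $p^c\in\mathbb{R}$ simultaneously, with payoffs $$U_{ISP}(p^s,p^c)=\gamma\, d(p^s,p^c)\,(p^s+p^c+p^a),\qquad U_{CP}(p^s,p^c)=(1-\gamma)\, d(p^s,p^c)\,(p^s+p^c+p^a).$$ A profile $(p^s,p^c)$ is a pure-strategy Nash equilibrium if and only if $$p^s+p^c=\frac{D_0-\alpha p^a}{2\alpha}.$$ In particular: - the pure-strategy equilibrium exists and is unique up to a free choice of $p^s$ (equivalently of $p^c$), with the net internaut price uniquely determined; - at every equilibrium the demand equals $\frac{D_0+\alpha p^a}{2}>0$; - there is no equilibrium with zero demand; - at equilibrium the net revenue per unit demand $p^s+p^c+p^a=\frac{D_0+\alpha p^a}{2\alpha}$ is shared in proportions $\gamma$ and $1-\gamma$ by the ISP and the CP. This sharing is effected by the regulator's choice $p^d=\gamma(p^c+p^a)-(1-\gamma)p^s$.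
   Context: Single ISP, single CP model. - $p^s$ and $p^c$ are the prices per unit demand paid by internauts to the ISP and to the CP respectively. - $p^a\ge0$ is the CP's advertising revenue per unit demand. - $p^d$ is the payment per unit demand from the CP to the ISP. - The ISP's utility is $d\,(p^s+p^d)$ and the CP's utility is $d\,(p^c+p^a-p^d)$. In the ex post regulation game, the players first set $p^s$ and $p^c$. Afterwards a regulator sets $p^d$ to maximize $U_{ISP}^\gamma U_{CP}^{1-\gamma}$, which gives $p^d=\gamma(p^c+p^a)-(1-\gamma)p^s$. Hence the ISP receives $p^s+p^d=\gamma(p^s+p^c+p^a)$ and the CP receives $p^c+p^a-p^d=(1-\gamma)(p^s+p^c+p^a)$ per unit demand. This yields the payoffs stated in the claim. *)

theory Defs
  imports Complex_Main
begin

definition demand :: "real \<Rightarrow> real \<Rightarrow> real \<Rightarrow> real \<Rightarrow> real" where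
  "demand D0 \<alpha> ps pc = max (D0 - \<alpha> * (ps + pc)) 0"

definition U_ISP :: "real \<Rightarrow> real \<Rightarrow> real \<Rightarrow> real \<Rightarrow> real \<Rightarrow> real \<Rightarrow> real" where
  "U_ISP D0 \<alpha> pa \<gamma> ps pc = \<gamma> * demand D0 \<alpha> ps pc * (ps + pc + pa)"

definition U_CP :: "real \<Rightarrow> real \<Rightarrow> real \<Rightarrow> real \<Rightarrow> real \<Rightarrow> real \<Rightarrow> real" where
  "U_CP D0 \<alpha> pa \<gamma> ps pc = (1 - \<gamma>) * demand D0 \<alpha> ps pc * (ps + pc + pa)"

definition reg_pd :: "real \<Rightarrow> real \<Rightarrow> real \<Rightarrow> real \<Rightarrow> real" where
  "reg_pd pa \<gamma> ps pc = \<gamma> * (pc + pa) - (1 - \<gamma>) * ps"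

definition is_NE :: "real \<Rightarrow> real \<Rightarrow> real \<Rightarrow> real \<Rightarrow> real \<Rightarrow> real \<Rightarrow> bool" where
  "is_NE D0 \<alpha> pa \<gamma> ps pc \<longleftrightarrow>
     (\<forall>ps'. U_ISP D0 \<alpha> pa \<gamma> ps' pc \<le> U_ISP D0 \<alpha> pa \<gamma> ps pc) \<and>
     (\<forall>pc'. U_CP D0 \<alpha> pa \<gamma> ps pc' \<le> U_CP D0 \<alpha> pa \<gamma> ps pc)"

end

theory Submission
  imports Defs
begin

text \<open>Both payoffs are fixed shares of the joint revenue \<open>d (p^s + p^c + p^a)\<close>, which depends
  only on the total price \<open>t = p^s + p^c\<close>. As a function of \<open>t\<close> it is the concave parabola
  \<open>(D0 - \<alpha> t)(t + p^a)\<close> where demand is positive and \<open>0\<close> elsewhere, so it has a unique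
  maximiser \<open>t = (D0 - \<alpha> p^a) / (2\<alpha>)\<close>, where it is positive. Each player can reach any total
  price by a unilateral deviation, hence a profile is an equilibrium exactly when its total
  price is this maximiser.\<close>

definition joint_revenue :: "real \<Rightarrow> real \<Rightarrow> real \<Rightarrow> real \<Rightarrow> real" where
  "joint_revenue D0 \<alpha> pa t = max (D0 - \<alpha> * t) 0 * (t + pa)"

definition optimal_price :: "real \<Rightarrow> real \<Rightarrow> real \<Rightarrow> real" where
  "optimal_price D0 \<alpha> pa = (D0 - \<alpha> * pa) / (2 * \<alpha>)"

lemma U_ISP_eq_joint_revenue:
  "U_ISP D0 \<alpha> pa \<gamma> ps pc = \<gamma> * joint_revenue D0 \<alpha> pa (ps + pc)"
  by (simp add: U_ISP_def joint_revenue_def demand_def add.assoc)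

lemma U_CP_eq_joint_revenue:
  "U_CP D0 \<alpha> pa \<gamma> ps pc = (1 - \<gamma>) * joint_revenue D0 \<alpha> pa (ps + pc)"
  by (simp add: U_CP_def joint_revenue_def demand_def add.assoc)

lemma optimal_price_add_pa:
  assumes "\<alpha> > 0"
  shows "optimal_price D0 \<alpha> pa + pa = (D0 + \<alpha> * pa) / (2 * \<alpha>)"
  using assms by (simp add: optimal_price_def field_simps)

lemma demand_at_optimal_price:
  assumes "\<alpha> > 0" and "D0 + \<alpha> * pa > 0" and "ps + pc = optimal_price D0 \<alpha> pa"
  shows "demand D0 \<alpha> ps pc = (D0 + \<alpha> * pa) / 2"
proof -
  have "D0 - \<alpha> * (ps + pc) = (D0 + \<alpha> * pa) / 2"
    using assms by (simp add: optimal_price_def field_simps)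
  then show ?thesis using assms(2) by (simp add: demand_def)
qed

lemma joint_revenue_optimal_price:
  assumes "\<alpha> > 0" and "D0 + \<alpha> * pa > 0"
  shows "joint_revenue D0 \<alpha> pa (optimal_price D0 \<alpha> pa) = (D0 + \<alpha> * pa)\<^sup>2 / (4 * \<alpha>)"
proof -
  have demand: "D0 - \<alpha> * optimal_price D0 \<alpha> pa = (D0 + \<alpha> * pa) / 2"
    using assms by (simp add: optimal_price_def field_simps)
  show ?thesis
    unfolding joint_revenue_def demand optimal_price_add_pa[OF assms(1)]
    using assms by (simp add: power2_eq_square field_simps)
qed

lemma joint_revenue_less_optimal:
  assumes "\<alpha> > 0" and "D0 + \<alpha> * pa > 0" and "t \<noteq> optimal_price D0 \<alpha> pa"
  shows "joint_revenue D0 \<alpha> pa t < joint_revenue D0 \<alpha> pa (optimal_price D0 \<alpha> pa)"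
  unfolding joint_revenue_optimal_price[OF assms(1,2)]
proof (cases "D0 - \<alpha> * t > 0")
  case True
  have "(D0 - \<alpha> * t) * (t + pa)
      = (D0 + \<alpha> * pa)\<^sup>2 / (4 * \<alpha>) - \<alpha> * (t - optimal_price D0 \<alpha> pa)\<^sup>2"
    using assms(1) by (simp add: optimal_price_def power2_eq_square field_simps)
  moreover have "\<alpha> * (t - optimal_price D0 \<alpha> pa)\<^sup>2 > 0"
    using assms(1,3) by simp
  ultimately show "joint_revenue D0 \<alpha> pa t < (D0 + \<alpha> * pa)\<^sup>2 / (4 * \<alpha>)"
    using True by (simp add: joint_revenue_def)
next
  case False
  then show "joint_revenue D0 \<alpha> pa t < (D0 + \<alpha> * pa)\<^sup>2 / (4 * \<alpha>)"
    using assms(1,2) by (simp add: joint_revenue_def)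
qed

lemma joint_revenue_le_optimal:
  assumes "\<alpha> > 0" and "D0 + \<alpha> * pa > 0"
  shows "joint_revenue D0 \<alpha> pa t \<le> joint_revenue D0 \<alpha> pa (optimal_price D0 \<alpha> pa)"
  using joint_revenue_less_optimal[OF assms, of t] by fastforce

lemma is_NE_iff_optimal_price:
  assumes "\<alpha> > 0" and "D0 + \<alpha> * pa > 0" and "0 < \<gamma>" and "\<gamma> < 1"
  shows "is_NE D0 \<alpha> pa \<gamma> ps pc \<longleftrightarrow> ps + pc = optimal_price D0 \<alpha> pa"
proof
  assume "is_NE D0 \<alpha> pa \<gamma> ps pc"
  then have "U_ISP D0 \<alpha> pa \<gamma> (optimal_price D0 \<alpha> pa - pc) pc \<le> U_ISP D0 \<alpha> pa \<gamma> ps pc"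
    unfolding is_NE_def by blast
  then have "joint_revenue D0 \<alpha> pa (optimal_price D0 \<alpha> pa) \<le> joint_revenue D0 \<alpha> pa (ps + pc)"
    using assms(3) by (simp add: U_ISP_eq_joint_revenue)
  then show "ps + pc = optimal_price D0 \<alpha> pa"
    using joint_revenue_less_optimal[OF assms(1,2), of "ps + pc"] by fastforce
next
  assume "ps + pc = optimal_price D0 \<alpha> pa"
  then show "is_NE D0 \<alpha> pa \<gamma> ps pc"
    using joint_revenue_le_optimal[OF assms(1,2)] assms(3,4)
    by (simp add: is_NE_def U_ISP_eq_joint_revenue U_CP_eq_joint_revenue)
qed

lemma ISP_share_reg_pd: "ps + reg_pd pa \<gamma> ps pc = \<gamma> * (ps + pc + pa)"
  by (simp add: reg_pd_def algebra_simps)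

lemma CP_share_reg_pd: "pc + pa - reg_pd pa \<gamma> ps pc = (1 - \<gamma>) * (ps + pc + pa)"
  by (simp add: reg_pd_def algebra_simps)

theorem theorem2:
  fixes D0 \<alpha> pa \<gamma> :: real
  assumes "D0 > 0" and "\<alpha> > 0" and "pa \<ge> 0" and "0 < \<gamma>" and "\<gamma> < 1"
  shows "(\<forall>ps pc. is_NE D0 \<alpha> pa \<gamma> ps pc \<longleftrightarrow> ps + pc = (D0 - \<alpha> * pa) / (2 * \<alpha>))
    \<and> (\<forall>ps. \<exists>!pc. is_NE D0 \<alpha> pa \<gamma> ps pc)
    \<and> (\<forall>pc. \<exists>!ps. is_NE D0 \<alpha> pa \<gamma> ps pc)
    \<and> (\<forall>ps pc. is_NE D0 \<alpha> pa \<gamma> ps pc \<longrightarrow>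
          demand D0 \<alpha> ps pc = (D0 + \<alpha> * pa) / 2 \<and> demand D0 \<alpha> ps pc > 0
        \<and> ps + pc + pa = (D0 + \<alpha> * pa) / (2 * \<alpha>)
        \<and> ps + reg_pd pa \<gamma> ps pc = \<gamma> * (ps + pc + pa)
        \<and> pc + pa - reg_pd pa \<gamma> ps pc = (1 - \<gamma>) * (ps + pc + pa))"
proof -
  have pos: "D0 + \<alpha> * pa > 0"
    using assms(1-3) by (simp add: add_pos_nonneg)
  note NE = is_NE_iff_optimal_price[OF assms(2) pos assms(4,5)]
  show ?thesis
  proof (intro conjI allI impI)
    fix ps pc
    show "is_NE D0 \<alpha> pa \<gamma> ps pc \<longleftrightarrow> ps + pc = (D0 - \<alpha> * pa) / (2 * \<alpha>)"
      by (simp add: NE optimal_price_def)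
    show "\<exists>!pc. is_NE D0 \<alpha> pa \<gamma> ps pc"
      by (rule ex1I[of _ "optimal_price D0 \<alpha> pa - ps"]) (auto simp: NE)
    show "\<exists>!ps. is_NE D0 \<alpha> pa \<gamma> ps pc"
      by (rule ex1I[of _ "optimal_price D0 \<alpha> pa - pc"]) (auto simp: NE)
    show "ps + reg_pd pa \<gamma> ps pc = \<gamma> * (ps + pc + pa)"
      "pc + pa - reg_pd pa \<gamma> ps pc = (1 - \<gamma>) * (ps + pc + pa)"
      by (rule ISP_share_reg_pd CP_share_reg_pd)+
    assume "is_NE D0 \<alpha> pa \<gamma> ps pc"
    then have total: "ps + pc = optimal_price D0 \<alpha> pa"
      using NE by blast
    show "demand D0 \<alpha> ps pc = (D0 + \<alpha> * pa) / 2" "demand D0 \<alpha> ps pc > 0"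
      using demand_at_optimal_price[OF assms(2) pos total] pos by simp_all
    show "ps + pc + pa = (D0 + \<alpha> * pa) / (2 * \<alpha>)"
      using total optimal_price_add_pa[OF assms(2)] by simp
  qed
qed

end
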